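(* For every $m\ge3$, the $m$-candidate plurality rule (score vector $(1,0,\dots,0)$) is dominated by some other $m$-candidate positional rule; indeed it is dominated both by the anti-plurality rule (score vector $(1,\dots,1,0)$) and by Borda's rule (score vector $w_i=(m-i)/(m-1)$).
   Context: For an $m$-candidate positional rule with score vector $w=(w_1,\dots,w_m)$, $1=w_1\ge\cdots\ge w_m=0$, let $\bar w=\frac1m\sum_iw_i$, $\sigma_w^2=\frac1m\sum_iw_i^2-\bar w^2$, $M_w=\{(\lambda,\mu):0\le\lambda\le\mu,\ w_{i+1}\lambda+(1-w_i)\mu\le1,\ i=1,\dots,m-1\}$, and $V_w=\sup\{\lambda(\rho_1(Z)-\bar Z)+\mu(\bar Z-\rho_2(Z)):(\lambda,\mu)\in\sigma_w(\frac{m}{m-1})^{1/2}M_w\}\in[0,\infty]$, where $Z=(Z_1,\dots,Z_m)$ has independent standard normal entries, $\bar Z$ is their mean and $\rho_j(Z)$ the $j$-th largest entry. (Under Impartial Culture, $V_w$ is the limiting distribution of the minimum manipulating coalition size divided by $\sqrt n$.) Let $g_w(v)=\mathbb P(V_w\le v)$. A rule $w$ dominates a rule $w'$ if $g_w(v)\le g_{w'}(v)$ for all $v\ge0$. *)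

theory Defs
  imports "HOL-Probability.Probability"
begin

(* Score vectors are indexed 1..m: w :: nat => real, entries w 1, ..., w m. *)

definition positional_rule :: "nat \<Rightarrow> (nat \<Rightarrow> real) \<Rightarrow> bool" where
  "positional_rule m w \<longleftrightarrow> w 1 = 1 \<and> w m = 0 \<and> (\<forall>i\<in>{1..<m}. w (Suc i) \<le> w i)"

definition w_mean :: "nat \<Rightarrow> (nat \<Rightarrow> real) \<Rightarrow> real" where
  "w_mean m w = (\<Sum>i=1..m. w i) / real m"

definition w_sd :: "nat \<Rightarrow> (nat \<Rightarrow> real) \<Rightarrow> real" where
  "w_sd m w = sqrt ((\<Sum>i=1..m. (w i)\<^sup>2) / real m - (w_mean m w)\<^sup>2)"

definition M_set :: "nat \<Rightarrow> (nat \<Rightarrow> real) \<Rightarrow> (real \<times> real) set" where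
  "M_set m w = {(l, u). 0 \<le> l \<and> l \<le> u \<and>
      (\<forall>i\<in>{1..<m}. w (Suc i) * l + (1 - w i) * u \<le> 1)}"

definition scaled_M_set :: "nat \<Rightarrow> (nat \<Rightarrow> real) \<Rightarrow> (real \<times> real) set" where
  "scaled_M_set m w =
     (\<lambda>(l, u). (w_sd m w * sqrt (real m / (real m - 1)) * l,
                w_sd m w * sqrt (real m / (real m - 1)) * u)) ` M_set m w"

definition z_mean :: "nat \<Rightarrow> (nat \<Rightarrow> real) \<Rightarrow> real" where
  "z_mean m Z = (\<Sum>i=1..m. Z i) / real m"

definition order_stat :: "nat \<Rightarrow> (nat \<Rightarrow> real) \<Rightarrow> nat \<Rightarrow> real" where
  "order_stat m Z j = rev (sort (map Z [1..<Suc m])) ! (j - 1)"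

definition V_w :: "nat \<Rightarrow> (nat \<Rightarrow> real) \<Rightarrow> (nat \<Rightarrow> real) \<Rightarrow> ereal" where
  "V_w m w Z = (SUP p \<in> scaled_M_set m w.
      ereal (fst p * (order_stat m Z 1 - z_mean m Z) + snd p * (z_mean m Z - order_stat m Z 2)))"

definition gauss_vec :: "nat \<Rightarrow> (nat \<Rightarrow> real) measure" where
  "gauss_vec m = PiM {1..m} (\<lambda>_. density lborel std_normal_density)"

definition g_w :: "nat \<Rightarrow> (nat \<Rightarrow> real) \<Rightarrow> real \<Rightarrow> real" where
  "g_w m w v = measure (gauss_vec m) {Z \<in> space (gauss_vec m). V_w m w Z \<le> ereal v}"

definition dominates :: "nat \<Rightarrow> (nat \<Rightarrow> real) \<Rightarrow> (nat \<Rightarrow> real) \<Rightarrow> bool" where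
  "dominates m w w' \<longleftrightarrow> (\<forall>v\<ge>0. g_w m w v \<le> g_w m w' v)"

definition plurality :: "nat \<Rightarrow> nat \<Rightarrow> real" where
  "plurality m i = (if i = 1 then 1 else 0)"

definition antiplurality :: "nat \<Rightarrow> nat \<Rightarrow> real" where
  "antiplurality m i = (if i = m then 0 else 1)"

definition borda :: "nat \<Rightarrow> nat \<Rightarrow> real" where
  "borda m i = (real m - real i) / (real m - 1)"

end

theory Submission
  imports Defs "HOL-Combinatorics.List_Permutation"
begin

(* V_w(Z) is the supremum of the linear form (l, u) |-> l (rho_1 - mean) + u (mean - rho_2) over
   the scaled set c_w M_w, with c_w = sigma_w (m/(m-1))^(1/2); so enlarging c_w M_w enlarges V_w
   pointwise and lowers g_w.  For plurality, M_w is the triangle 0 <= l <= u <= 1 and c_w = 1/sqrt m.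
   A rule with scores in [0, 1] contains the triangle scaled by k in M_w as soon as
   k (w_(i+1) + 1 - w_i) <= 1 for all i.  Antiplurality has the same c_w and these sums are at most 1;
   for Borda they all equal (m-2)/(m-1) and c_w = sqrt(m(m+1)/12)/(m-1), which reduces the claim to
   12 (m-2)^2 <= m^2 (m+1).  Finally, the comparison of measures needs the sublevel sets of the
   plurality V_w to be measurable: there V_w <= v only has to be checked at the three vertices of
   the triangle, and the two top order statistics are Borel as maxima of minima of coordinates. *)

definition offdiag :: "'a set \<Rightarrow> ('a \<times> 'a) set" where
  "offdiag A = {(i, j). i \<in> A \<and> j \<in> A \<and> i \<noteq> j}"

lemma finite_offdiag: "finite A \<Longrightarrow> finite (offdiag A)"
  unfolding offdiag_def by (rule finite_subset[of _ "A \<times> A"]) auto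

lemma offdiag_image:
  assumes "inj_on f A"
  shows "map_prod f f ` offdiag A = offdiag (f ` A)"
proof
  show "map_prod f f ` offdiag A \<subseteq> offdiag (f ` A)"
    using assms by (auto simp: offdiag_def inj_on_eq_iff)
  show "offdiag (f ` A) \<subseteq> map_prod f f ` offdiag A"
    by (auto simp: offdiag_def)
qed

lemma sort_desc_nth_mono:
  fixes xs :: "'a::linorder list"
  assumes "i \<le> j" "j < length xs"
  shows "rev (sort xs) ! j \<le> rev (sort xs) ! i"
  using assms by (simp add: rev_nth sorted_nth_mono)

lemma sort_desc_nth0_eq_Max:
  fixes xs :: "'a::linorder list"
  assumes "xs \<noteq> []"
  shows "rev (sort xs) ! 0 = Max (set xs)"
proof (rule Max_eqI[symmetric])
  show "y \<le> rev (sort xs) ! 0" if "y \<in> set xs" for y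
  proof -
    from that obtain j where "j < length xs" "y = rev (sort xs) ! j"
      by (metis in_set_conv_nth length_rev length_sort set_rev set_sort)
    then show ?thesis using sort_desc_nth_mono[of 0 j xs] by simp
  qed
  show "rev (sort xs) ! 0 \<in> set xs"
    using assms by (metis length_greater_0_conv length_rev length_sort nth_mem set_rev set_sort)
qed simp

lemma sort_desc_nth1_eq_Max_min:
  fixes xs :: "'a::linorder list"
  assumes len: "2 \<le> length xs"
  shows "rev (sort xs) ! 1 = Max ((\<lambda>(i, j). min (xs ! i) (xs ! j)) ` offdiag {..<length xs})"
proof -
  define s where "s = rev (sort xs)"
  define P where "P = offdiag {..<length xs}"
  have "xs <~~> s" by (simp add: s_def)
  from permutation_Ex_bij[OF this] obtain f
    where "bij_betw f {..<length xs} {..<length s}" and f_nth: "\<forall>i<length xs. xs ! i = s ! f i"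
    by blast
  then have "bij_betw f {..<length xs} {..<length xs}" by (simp add: s_def)
  then have "map_prod f f ` P = P"
    unfolding P_def by (simp add: offdiag_image bij_betw_def)
  moreover have "(\<lambda>(i, j). min (xs ! i) (xs ! j)) ` P = (\<lambda>(i, j). min (s ! i) (s ! j)) ` map_prod f f ` P"
    unfolding image_image by (intro image_cong) (auto simp: P_def offdiag_def f_nth)
  moreover have "Max ((\<lambda>(i, j). min (s ! i) (s ! j)) ` P) = s ! 1"
  proof (rule Max_eqI)
    show "finite ((\<lambda>(i, j). min (s ! i) (s ! j)) ` P)"
      by (simp add: P_def finite_offdiag)
    show "y \<le> s ! 1" if "y \<in> (\<lambda>(i, j). min (s ! i) (s ! j)) ` P" for y
    proof -
      from that obtain i j where ij: "i < length xs" "j < length xs" "i \<noteq> j"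
          "y = min (s ! i) (s ! j)"
        by (auto simp: P_def offdiag_def)
      have "y \<le> s ! max i j" using ij by (simp add: max_def)
      moreover have "s ! max i j \<le> s ! 1"
        using ij sort_desc_nth_mono[of 1 "max i j" xs] by (simp add: s_def max_def)
      ultimately show ?thesis by (rule order_trans)
    qed
    have "s ! 1 \<le> s ! 0" unfolding s_def using len by (intro sort_desc_nth_mono) simp_all
    then have "min (s ! 0) (s ! 1) = s ! 1" by (rule min_absorb2)
    moreover have "(0, 1) \<in> P"
      using len by (simp add: P_def offdiag_def del: length_greater_0_conv)
    ultimately show "s ! 1 \<in> (\<lambda>(i, j). min (s ! i) (s ! j)) ` P"
      by (intro rev_image_eqI[of "(0, 1)"]) simp_all
  qed
  ultimately show ?thesis unfolding s_def[symmetric] P_def[symmetric] by simp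
qed

lemma order_stat_1_eq_Max:
  assumes "1 \<le> m"
  shows "order_stat m Z 1 = Max (Z ` {1..m})"
  using assms sort_desc_nth0_eq_Max[of "map Z [1..<Suc m]"]
  by (simp add: order_stat_def atLeastLessThanSuc_atLeastAtMost del: upt_Suc)

lemma order_stat_2_eq_Max_min:
  assumes "2 \<le> m"
  shows "order_stat m Z 2 = Max ((\<lambda>(i, j). min (Z i) (Z j)) ` offdiag {1..m})"
proof -
  define xs where "xs = map Z [1..<Suc m]"
  have len: "length xs = m" by (simp add: xs_def)
  have nth: "xs ! i = Z (Suc i)" if "i < m" for i using that by (simp add: xs_def del: upt_Suc)
  have "order_stat m Z 2 = Max ((\<lambda>(i, j). min (xs ! i) (xs ! j)) ` offdiag {..<m})"
    unfolding order_stat_def xs_def[symmetric] using sort_desc_nth1_eq_Max_min[of xs] assms len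
    by simp
  also have "(\<lambda>(i, j). min (xs ! i) (xs ! j)) ` offdiag {..<m}
      = (\<lambda>(i, j). min (Z i) (Z j)) ` map_prod Suc Suc ` offdiag {..<m}"
    unfolding image_image by (intro image_cong) (auto simp: offdiag_def nth)
  also have "map_prod Suc Suc ` offdiag {..<m} = offdiag {1..m}"
    by (simp add: offdiag_image image_Suc_lessThan)
  finally show ?thesis .
qed

lemma prob_space_gauss_vec: "prob_space (gauss_vec m)"
  unfolding gauss_vec_def by (intro prob_space_PiM prob_space_normal_density) simp

lemma borel_measurable_gauss_vec_component:
  assumes "i \<in> {1..m}"
  shows "(\<lambda>Z. Z i) \<in> borel_measurable (gauss_vec m)"
proof -
  have "(\<lambda>Z. Z i) \<in> measurable (gauss_vec m) (density lborel std_normal_density)"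
    unfolding gauss_vec_def using assms by (rule measurable_component_singleton)
  then show ?thesis by simp
qed

lemma borel_measurable_z_mean: "(\<lambda>Z. z_mean m Z) \<in> borel_measurable (gauss_vec m)"
  unfolding z_mean_def
  by (intro borel_measurable_divide borel_measurable_sum borel_measurable_gauss_vec_component) simp_all

lemma borel_measurable_order_stat_1:
  assumes "1 \<le> m"
  shows "(\<lambda>Z. order_stat m Z 1) \<in> borel_measurable (gauss_vec m)"
  unfolding order_stat_1_eq_Max[OF assms]
  by (intro borel_measurable_Max borel_measurable_gauss_vec_component) simp_all

lemma borel_measurable_order_stat_2:
  assumes "2 \<le> m"
  shows "(\<lambda>Z. order_stat m Z 2) \<in> borel_measurable (gauss_vec m)"
  unfolding order_stat_2_eq_Max_min[OF assms]
proof (intro borel_measurable_Max finite_offdiag)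
  fix p assume "p \<in> offdiag {1..m}"
  then have "fst p \<in> {1..m}" "snd p \<in> {1..m}" by (auto simp: offdiag_def)
  then show "(\<lambda>Z. case p of (i, j) \<Rightarrow> min (Z i) (Z j)) \<in> borel_measurable (gauss_vec m)"
    by (simp add: case_prod_beta borel_measurable_min borel_measurable_gauss_vec_component)
qed simp

definition M_scale :: "nat \<Rightarrow> (nat \<Rightarrow> real) \<Rightarrow> real" where
  "M_scale m w = w_sd m w * sqrt (real m / (real m - 1))"

definition unit_triangle :: "(real \<times> real) set" where
  "unit_triangle = {(l, u). 0 \<le> l \<and> l \<le> u \<and> u \<le> 1}"

lemma scaled_M_set_eq: "scaled_M_set m w = (\<lambda>(l, u). (M_scale m w * l, M_scale m w * u)) ` M_set m w"
  by (simp add: scaled_M_set_def M_scale_def)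

lemma V_w_mono:
  assumes "scaled_M_set m w' \<subseteq> scaled_M_set m w"
  shows "V_w m w' Z \<le> V_w m w Z"
  unfolding V_w_def using assms by (intro SUP_subset_mono) auto

lemma dominates_if_scaled_M_set_subset:
  assumes subset: "scaled_M_set m w' \<subseteq> scaled_M_set m w"
    and sets: "\<And>v. {Z \<in> space (gauss_vec m). V_w m w' Z \<le> ereal v} \<in> sets (gauss_vec m)"
  shows "dominates m w w'"
  unfolding dominates_def
proof (intro allI impI)
  fix v :: real
  interpret prob_space "gauss_vec m" by (rule prob_space_gauss_vec)
  have "{Z \<in> space (gauss_vec m). V_w m w Z \<le> ereal v}
      \<subseteq> {Z \<in> space (gauss_vec m). V_w m w' Z \<le> ereal v}"
    using V_w_mono[OF subset] order_trans by blast
  then show "g_w m w v \<le> g_w m w' v"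
    unfolding g_w_def using sets by (rule finite_measure_mono)
qed

lemma SUP_unit_triangle_le_iff:
  "(SUP p \<in> unit_triangle. ereal (fst p * a + snd p * b)) \<le> ereal v \<longleftrightarrow> 0 \<le> v \<and> b \<le> v \<and> a + b \<le> v"
proof
  assume "(SUP p \<in> unit_triangle. ereal (fst p * a + snd p * b)) \<le> ereal v"
  then have "fst p * a + snd p * b \<le> v" if "p \<in> unit_triangle" for p
    using that by (simp add: SUP_le_iff)
  from this[of "(0, 0)"] this[of "(0, 1)"] this[of "(1, 1)"]
  show "0 \<le> v \<and> b \<le> v \<and> a + b \<le> v" by (simp add: unit_triangle_def)
next
  assume v: "0 \<le> v \<and> b \<le> v \<and> a + b \<le> v"
  have "l * a + u * b \<le> v" if "0 \<le> l" "l \<le> u" "u \<le> 1" for l u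
  proof -
    have "l * a + u * b = l * (a + b) + (u - l) * b" by (simp add: algebra_simps)
    also have "\<dots> \<le> l * v + (u - l) * v"
      using that v by (intro add_mono mult_left_mono) simp_all
    also have "\<dots> = u * v" by (simp add: algebra_simps)
    also have "\<dots> \<le> v" using that v by (simp add: mult_left_le_one_le)
    finally show ?thesis .
  qed
  then show "(SUP p \<in> unit_triangle. ereal (fst p * a + snd p * b)) \<le> ereal v"
    by (auto simp: SUP_le_iff unit_triangle_def)
qed

lemma M_set_plurality:
  assumes "3 \<le> m"
  shows "M_set m (plurality m) = unit_triangle"
proof -
  have "(\<forall>i\<in>{1..<m}. plurality m (Suc i) * l + (1 - plurality m i) * u \<le> 1) \<longleftrightarrow> u \<le> 1"
    for l u :: real
  proof
    assume "\<forall>i\<in>{1..<m}. plurality m (Suc i) * l + (1 - plurality m i) * u \<le> 1"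
    from this[rule_format, of 2] show "u \<le> 1" using assms by (simp add: plurality_def)
  qed (auto simp: plurality_def)
  then show ?thesis unfolding M_set_def unit_triangle_def by auto
qed

lemma V_w_plurality_le_iff:
  assumes m: "3 \<le> m"
  defines "c \<equiv> M_scale m (plurality m)"
  shows "V_w m (plurality m) Z \<le> ereal v \<longleftrightarrow>
    0 \<le> v \<and> c * (z_mean m Z - order_stat m Z 2) \<le> v \<and>
    c * (order_stat m Z 1 - z_mean m Z) + c * (z_mean m Z - order_stat m Z 2) \<le> v"
proof -
  have "V_w m (plurality m) Z = (SUP p \<in> unit_triangle.
      ereal (fst p * (c * (order_stat m Z 1 - z_mean m Z)) + snd p * (c * (z_mean m Z - order_stat m Z 2))))"
    unfolding V_w_def scaled_M_set_eq M_set_plurality[OF m] image_image c_def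
    by (intro SUP_cong) (auto simp: algebra_simps)
  then show ?thesis by (simp only: SUP_unit_triangle_le_iff)
qed

lemma sets_V_w_plurality_le:
  assumes "3 \<le> m"
  shows "{Z \<in> space (gauss_vec m). V_w m (plurality m) Z \<le> ereal v} \<in> sets (gauss_vec m)"
proof -
  note [measurable] = borel_measurable_order_stat_1 borel_measurable_order_stat_2 borel_measurable_z_mean
  have "1 \<le> m" "2 \<le> m" using assms by simp_all
  then show ?thesis unfolding V_w_plurality_le_iff[OF assms] by measurable
qed

lemma scaled_unit_triangle_subset_M_set:
  assumes k: "0 \<le> k"
    and w: "\<And>i. i \<in> {1..<m} \<Longrightarrow> 0 \<le> w (Suc i) \<and> w i \<le> 1 \<and> k * (w (Suc i) + 1 - w i) \<le> 1"
  shows "(\<lambda>(l, u). (k * l, k * u)) ` unit_triangle \<subseteq> M_set m w"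
proof
  fix p assume "p \<in> (\<lambda>(l, u). (k * l, k * u)) ` unit_triangle"
  then obtain l u where p: "p = (k * l, k * u)" and lu: "0 \<le> l" "l \<le> u" "u \<le> 1"
    by (auto simp: unit_triangle_def)
  have "w (Suc i) * (k * l) + (1 - w i) * (k * u) \<le> 1" if i: "i \<in> {1..<m}" for i
  proof -
    note wi = w[OF i]
    have "k * l \<le> k * u" using k lu by (simp add: mult_left_mono)
    then have "w (Suc i) * (k * l) \<le> w (Suc i) * (k * u)" using wi by (simp add: mult_left_mono)
    then have "w (Suc i) * (k * l) + (1 - w i) * (k * u) \<le> w (Suc i) * (k * u) + (1 - w i) * (k * u)"
      by simp
    also have "\<dots> = (k * (w (Suc i) + 1 - w i)) * u" by (simp add: algebra_simps)
    also have "\<dots> \<le> 1" using wi lu by (rule_tac mult_le_one) simp_all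
    finally show ?thesis .
  qed
  moreover have "0 \<le> k * l" "k * l \<le> k * u" using k lu by (simp_all add: mult_left_mono)
  ultimately show "p \<in> M_set m w" unfolding M_set_def p by auto
qed

lemma w_sd_one_minus: "w_sd m (\<lambda>i. 1 - w i) = w_sd m w"
proof -
  define S where "S = (\<Sum>i=1..m. w i)"
  define Q where "Q = (\<Sum>i=1..m. (w i)\<^sup>2)"
  have sq: "(\<Sum>i=1..m. (1 - w i)\<^sup>2) = real m - 2 * S + Q"
    by (simp add: S_def Q_def power2_diff sum.distrib sum_subtractf sum_distrib_left)
  have lin: "(\<Sum>i=1..m. 1 - w i) = real m - S"
    by (simp add: S_def sum_subtractf)
  show ?thesis
    unfolding w_sd_def w_mean_def sq lin S_def[symmetric] Q_def[symmetric]
    by (cases "m = 0") (simp_all add: field_simps power2_eq_square)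
qed

lemma w_sd_indicator:
  assumes "j \<in> {1..m}"
  shows "w_sd m (\<lambda>i. if i = j then 1 else 0) = sqrt (1 / real m - 1 / (real m)\<^sup>2)"
proof -
  have "(if i = j then 1 else 0 :: real)\<^sup>2 = (if i = j then 1 else 0)" for i by simp
  then show ?thesis using assms by (simp add: w_sd_def w_mean_def power_divide)
qed

lemma M_scale_indicator:
  assumes "2 \<le> m" "j \<in> {1..m}"
  shows "M_scale m (\<lambda>i. if i = j then 1 else 0) = 1 / sqrt (real m)"
proof -
  have "(1 / real m - 1 / (real m)\<^sup>2) * (real m / (real m - 1)) = 1 / real m"
    using assms(1) by (simp add: field_simps power2_eq_square)
  then show ?thesis
    unfolding M_scale_def w_sd_indicator[OF assms(2)] real_sqrt_mult[symmetric]
    by (simp add: real_sqrt_divide)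
qed

lemma M_scale_plurality: "2 \<le> m \<Longrightarrow> M_scale m (plurality m) = 1 / sqrt (real m)"
  using M_scale_indicator[of m 1] by (simp add: plurality_def[abs_def])

lemma M_scale_antiplurality: "2 \<le> m \<Longrightarrow> M_scale m (antiplurality m) = 1 / sqrt (real m)"
proof -
  have "antiplurality m = (\<lambda>i. 1 - (if i = m then 1 else 0))"
    by (auto simp: antiplurality_def)
  then show "2 \<le> m \<Longrightarrow> ?thesis"
    using M_scale_indicator[of m m] by (simp add: M_scale_def w_sd_one_minus)
qed

lemma dominates_plurality_criterion:
  assumes m: "3 \<le> m" and pos: "0 < M_scale m w"
    and w: "\<And>i. i \<in> {1..<m} \<Longrightarrow> 0 \<le> w (Suc i) \<and> w i \<le> 1 \<and>
      M_scale m (plurality m) * (w (Suc i) + 1 - w i) \<le> M_scale m w"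
  shows "dominates m w (plurality m)"
proof (rule dominates_if_scaled_M_set_subset[OF _ sets_V_w_plurality_le[OF m]])
  define c where "c = M_scale m w"
  define k where "k = M_scale m (plurality m) / c"
  have "0 \<le> k" using pos m by (simp add: k_def c_def M_scale_plurality)
  moreover have "k * (w (Suc i) + 1 - w i) \<le> 1" if "i \<in> {1..<m}" for i
    using w[OF that] pos by (simp add: k_def c_def field_simps)
  ultimately have "(\<lambda>(l, u). (k * l, k * u)) ` unit_triangle \<subseteq> M_set m w"
    using w by (intro scaled_unit_triangle_subset_M_set) auto
  then have "(\<lambda>(l, u). (c * l, c * u)) ` (\<lambda>(l, u). (k * l, k * u)) ` unit_triangle
      \<subseteq> (\<lambda>(l, u). (c * l, c * u)) ` M_set m w"
    by (rule image_mono)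
  moreover have "c * k = M_scale m (plurality m)" using pos by (simp add: k_def c_def)
  ultimately show "scaled_M_set m (plurality m) \<subseteq> scaled_M_set m w"
    unfolding scaled_M_set_eq M_set_plurality[OF m] image_image c_def[symmetric]
    by (simp add: mult.assoc[symmetric] case_prod_beta)
qed

lemma antiplurality_dominates_plurality:
  assumes m: "3 \<le> m"
  shows "dominates m (antiplurality m) (plurality m)"
proof (rule dominates_plurality_criterion[OF m])
  show "0 < M_scale m (antiplurality m)" using m by (simp add: M_scale_antiplurality)
  fix i assume "i \<in> {1..<m}"
  then show "0 \<le> antiplurality m (Suc i) \<and> antiplurality m i \<le> 1 \<and>
      M_scale m (plurality m) * (antiplurality m (Suc i) + 1 - antiplurality m i)
        \<le> M_scale m (antiplurality m)"
    using m by (simp add: M_scale_plurality M_scale_antiplurality antiplurality_def)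
qed

lemma w_sd_borda:
  assumes "2 \<le> m"
  shows "w_sd m (borda m) = sqrt ((real m + 1) / (12 * (real m - 1)))"
proof -
  define n where "n = real m"
  have n: "2 \<le> n" using assms by (simp add: n_def)
  have gauss1: "(\<Sum>i=1..k. real i) = real k * (real k + 1) / 2" for k
    by (induction k) (simp_all add: field_simps)
  have gauss2: "(\<Sum>i=1..k. (real i)\<^sup>2) = real k * (real k + 1) * (2 * real k + 1) / 6" for k
    by (induction k) (simp_all add: field_simps power2_eq_square)
  have sum1: "(\<Sum>i=1..m. borda m i) = n / 2"
  proof -
    have "(\<Sum>i=1..m. borda m i) = (n * n - n * (n + 1) / 2) / (n - 1)"
      unfolding borda_def sum_divide_distrib[symmetric] sum_subtractf gauss1 n_def by simp
    also have "\<dots> = n / 2" using n by (simp add: field_simps)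
    finally show ?thesis .
  qed
  have sum2: "(\<Sum>i=1..m. (borda m i)\<^sup>2) = n * (2 * n - 1) / (6 * (n - 1))"
  proof -
    have "(\<Sum>i=1..m. (borda m i)\<^sup>2) = (\<Sum>i=1..m. (n\<^sup>2 + (real i)\<^sup>2 - 2 * n * real i) / (n - 1)\<^sup>2)"
      unfolding borda_def n_def by (simp add: power_divide power2_diff)
    also have "\<dots> = (n * n\<^sup>2 + n * (n + 1) * (2 * n + 1) / 6 - 2 * n * (n * (n + 1) / 2)) / (n - 1)\<^sup>2"
      unfolding sum_divide_distrib[symmetric] sum.distrib sum_subtractf sum_distrib_left[symmetric]
        gauss1 gauss2 n_def
      by simp
    also have "n * n\<^sup>2 + n * (n + 1) * (2 * n + 1) / 6 - 2 * n * (n * (n + 1) / 2)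
        = n * (2 * n - 1) * (n - 1) / 6"
      by (simp add: field_simps power2_eq_square)
    also have "n * (2 * n - 1) * (n - 1) / 6 / (n - 1)\<^sup>2 = n * (2 * n - 1) / (6 * (n - 1))"
      using n by (simp add: power2_eq_square)
    finally show ?thesis .
  qed
  have "n * (2 * n - 1) / (6 * (n - 1)) / n - (n / 2 / n)\<^sup>2 = (n + 1) / (12 * (n - 1))"
    using n by (simp add: field_simps power2_eq_square)
  then show ?thesis unfolding w_sd_def w_mean_def sum1 sum2 n_def by simp
qed

lemma M_scale_borda:
  assumes "2 \<le> m"
  shows "M_scale m (borda m) = sqrt (real m * (real m + 1) / 12) / (real m - 1)"
proof -
  have "(real m + 1) / (12 * (real m - 1)) * (real m / (real m - 1))
      = real m * (real m + 1) / 12 / (real m - 1)\<^sup>2"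
    by (simp add: field_simps power2_eq_square)
  then have "M_scale m (borda m) = sqrt (real m * (real m + 1) / 12 / (real m - 1)\<^sup>2)"
    unfolding M_scale_def w_sd_borda[OF assms] real_sqrt_mult[symmetric] by simp
  also have "\<dots> = sqrt (real m * (real m + 1) / 12) / (real m - 1)"
    using assms by (simp only: real_sqrt_divide[of _ "(real m - 1)\<^sup>2"] real_sqrt_abs)
  finally show ?thesis .
qed

lemma borda_scale_bound:
  assumes "3 \<le> m"
  shows "(real m - 2) / sqrt (real m) \<le> sqrt (real m * (real m + 1) / 12)"
proof -
  define n where "n = real m"
  have n: "3 \<le> n" using assms by (simp add: n_def)
  (* n^2 (n+1) - 12 (n-2)^2 = (n-3) ((n-4)^2 + 8) + 24 *)
  have "0 \<le> (n - 3) * ((n - 4)\<^sup>2 + 8)" using n by simp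
  then have "12 * (n - 2)\<^sup>2 \<le> n * (n * (n + 1))"
    by (simp add: algebra_simps power2_eq_square)
  then have "(n - 2)\<^sup>2 / n \<le> n * (n + 1) / 12" using n by (simp add: field_simps)
  then have "sqrt ((n - 2)\<^sup>2 / n) \<le> sqrt (n * (n + 1) / 12)" by (rule real_sqrt_le_mono)
  then show ?thesis using n by (simp add: n_def real_sqrt_divide)
qed

lemma borda_dominates_plurality:
  assumes m: "3 \<le> m"
  shows "dominates m (borda m) (plurality m)"
proof (rule dominates_plurality_criterion[OF m])
  have "1 < real m" using m by simp
  then show "0 < M_scale m (borda m)" using m by (simp add: M_scale_borda)
  fix i assume i: "i \<in> {1..<m}"
  have "borda m (Suc i) = borda m i - 1 / (real m - 1)"
    unfolding borda_def by (simp add: diff_divide_distrib[symmetric] algebra_simps)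
  moreover have "1 - 1 / (real m - 1) = (real m - 2) / (real m - 1)"
    using m by (simp add: field_simps)
  ultimately have "borda m (Suc i) + 1 - borda m i = (real m - 2) / (real m - 1)"
    by simp
  moreover have "1 / sqrt (real m) * ((real m - 2) / (real m - 1))
      \<le> sqrt (real m * (real m + 1) / 12) / (real m - 1)"
  proof -
    have "(real m - 2) / sqrt (real m) / (real m - 1) \<le> sqrt (real m * (real m + 1) / 12) / (real m - 1)"
      using borda_scale_bound[OF m] m by (intro divide_right_mono) simp_all
    then show ?thesis by simp
  qed
  moreover have "0 \<le> borda m (Suc i)" "borda m i \<le> 1"
    using i by (simp_all add: borda_def)
  ultimately show "0 \<le> borda m (Suc i) \<and> borda m i \<le> 1 \<and>
      M_scale m (plurality m) * (borda m (Suc i) + 1 - borda m i) \<le> M_scale m (borda m)"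
    using m by (simp add: M_scale_plurality M_scale_borda)
qed

theorem proposition12:
  fixes m :: nat
  assumes "m \<ge> 3"
  shows "(\<exists>w. positional_rule m w \<and> (\<exists>i\<in>{1..m}. w i \<noteq> plurality m i)
              \<and> dominates m w (plurality m))
         \<and> dominates m (antiplurality m) (plurality m)
         \<and> dominates m (borda m) (plurality m)"
proof (intro conjI)
  show "dominates m (antiplurality m) (plurality m)"
    using assms by (rule antiplurality_dominates_plurality)
  show "dominates m (borda m) (plurality m)"
    using assms by (rule borda_dominates_plurality)
  have "positional_rule m (antiplurality m)"
    using assms by (auto simp: positional_rule_def antiplurality_def)
  moreover have "2 \<in> {1..m}" "antiplurality m 2 \<noteq> plurality m 2"
    using assms by (auto simp: antiplurality_def plurality_def)
  ultimately show "\<exists>w. positional_rule m w \<and> (\<exists>i\<in>{1..m}. w i \<noteq> plurality m i)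
      \<and> dominates m w (plurality m)"
    using antiplurality_dominates_plurality[OF assms] by blast
qed

end
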